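(* Let $n\geq 0$ be an integer and let $\alpha,\beta\in\mathbb{C}$ with $\beta\neq 0$ and $\alpha^2\neq 4\beta$. Fix a square root $\sqrt{\alpha^2-4\beta}$ and write $D=\alpha^2-4\beta$, with $D^{t/2}:=(\sqrt{D})^{t}$. Then $$M_n^{(\alpha,\beta)}=\sum_{k=0}^{n+1}\left(\frac{\alpha+\sqrt{D}}{2}\right)^{n-2k}\frac{\beta^k}{n+1}\binom{n+1}{k}\binom{n+1}{k+1} =\frac{D^{\frac{n+2}{2}}}{\beta}\sum_{k=0}^{n+1}\left(\frac{\alpha}{\sqrt{D}}-1\right)^{k+1}\frac{C_k}{2^{k+1}}\binom{n+1+k}{2k},$$ where $C_k$ is the $k$-th Catalan number and $M_n^{(\alpha,\beta)}$ is the weighted Motzkin number defined in the context.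
   Context: $C_k=\frac{1}{k+1}\binom{2k}{k}$ are the Catalan numbers. For an integer $m\geq 0$ and $a,b\in\mathbb{C}$, the $(a,b)$-Motzkin number is $M_m^{(a,b)}=\sum_{k=0}^{\lfloor m/2\rfloor}\binom{m}{2k}C_k a^{m-2k}b^k$. (Binomial coefficients $\binom{p}{q}$ with $q>p$ are $0$.) *)

theory Defs
  imports Complex_Main
begin

definition catalan :: "nat \<Rightarrow> nat" where
  "catalan k = (2*k choose k) div (k+1)"

definition motzkin :: "nat \<Rightarrow> complex \<Rightarrow> complex \<Rightarrow> complex" where
  "motzkin m a b = (\<Sum>k=0..m div 2. of_nat (m choose (2*k)) * of_nat (catalan k) * a^(m - 2*k) * b^k)"

end

theory Submission
  imports Defs
begin

text \<open>
  Write \<open>\<alpha> = x + y\<close> and \<open>\<beta> = x y\<close> with \<open>x, y = (\<alpha> \<plusminus> \<surd>D) / 2\<close>. Expanding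
  \<open>(x + y)^(n - 2j) (x y)^j\<close> in the definition of the Motzkin number and collecting terms
  (a Vandermonde convolution) gives the homogeneous form \<open>M_n = \<Sum>_k N(n+1, k+1) y^k x^(n-k)\<close>
  in the Narayana numbers; the first formula is this sum with \<open>x^(n-2k) \<beta>^k = x^(n-k) y^k\<close>.
  For the second, substitute \<open>x = \<surd>D + y\<close> and expand once more: the coefficient of
  \<open>y^k \<surd>D^(n+1-k)\<close> in \<open>\<Sum>_k N(n+1, k+1) y^k x^(n+1-k)\<close> is \<open>C_k binom(n+1+k, 2k)\<close>,
  again by Vandermonde.
\<close>

lemma sum_atMost_triangle_swap:
  "(\<Sum>j\<le>N. \<Sum>i\<le>N-j. f j i) = (\<Sum>k\<le>N. \<Sum>j\<le>k. f j (k - j :: nat))"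
proof -
  have "{(j,i). j + i \<le> N} = Sigma {..N} (\<lambda>j. {..N-j})" by auto
  then have "(\<Sum>j\<le>N. \<Sum>i\<le>N-j. f j i) = (\<Sum>(j,i)\<in>{(j,i). j + i \<le> N}. f j i)"
    by (simp add: sum.Sigma)
  also have "\<dots> = (\<Sum>k\<le>N. \<Sum>j\<le>k. f j (k - j))"
    by (rule sum.triangle_reindex_eq)
  finally show ?thesis .
qed

lemma sum_binomial_expand_homogeneous:
  fixes x y :: "'a::comm_semiring_1"
  assumes "\<And>j. j \<le> N \<Longrightarrow> j + e j \<le> N"
  shows "(\<Sum>j\<le>N. a j * y^j * (x + y)^(e j) * x^(N - j - e j))
       = (\<Sum>k\<le>N. (\<Sum>j\<le>k. a j * of_nat (e j choose (k - j))) * y^k * x^(N - k))"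
proof -
  have "(\<Sum>j\<le>N. a j * y^j * (x + y)^(e j) * x^(N - j - e j))
      = (\<Sum>j\<le>N. \<Sum>i\<le>N-j. a j * of_nat (e j choose i) * y^(j + i) * x^(N - (j + i)))"
  proof (rule sum.cong[OF refl])
    fix j assume "j \<in> {..N}"
    then have le: "j + e j \<le> N" using assms by simp
    have "(x + y)^(e j) = (\<Sum>i\<le>e j. of_nat (e j choose i) * y^i * x^(e j - i))"
      using binomial_ring[of y x "e j"] by (simp add: add.commute)
    also have "\<dots> = (\<Sum>i\<le>N-j. of_nat (e j choose i) * y^i * x^(e j - i))"
      using le by (intro sum.mono_neutral_left) (auto simp: binomial_eq_0)
    finally have "a j * y^j * (x + y)^(e j) * x^(N - j - e j)
        = (\<Sum>i\<le>N-j. a j * of_nat (e j choose i) * y^i * y^j * (x^(e j - i) * x^(N - j - e j)))"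
      by (simp add: sum_distrib_left sum_distrib_right mult_ac)
    also have "\<dots> = (\<Sum>i\<le>N-j. a j * of_nat (e j choose i) * y^(j + i) * x^(N - (j + i)))"
    proof (rule sum.cong[OF refl])
      fix i assume "i \<in> {..N-j}"
      show "a j * of_nat (e j choose i) * y^i * y^j * (x^(e j - i) * x^(N - j - e j))
          = a j * of_nat (e j choose i) * y^(j + i) * x^(N - (j + i))"
      proof (cases "i \<le> e j")
        case True
        then have "x^(e j - i) * x^(N - j - e j) = x^(N - (j + i))"
          using True le by (simp add: add.commute flip: power_add)
        then show ?thesis by (simp add: power_add mult_ac)
      qed (simp add: binomial_eq_0)
    qed
    finally show "a j * y^j * (x + y)^(e j) * x^(N - j - e j)
        = (\<Sum>i\<le>N-j. a j * of_nat (e j choose i) * y^(j + i) * x^(N - (j + i)))" .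
  qed
  also have "\<dots> = (\<Sum>k\<le>N. \<Sum>j\<le>k. a j * of_nat (e j choose (k - j)) * y^(j + (k - j)) * x^(N - (j + (k - j))))"
    by (rule sum_atMost_triangle_swap)
  also have "\<dots> = (\<Sum>k\<le>N. (\<Sum>j\<le>k. a j * of_nat (e j choose (k - j))) * y^k * x^(N - k))"
    by (auto intro!: sum.cong simp: sum_distrib_right)
  finally show ?thesis .
qed

lemma of_nat_catalan: "(of_nat (catalan k) :: 'a::field_char_0) = of_nat (2*k choose k) / of_nat (Suc k)"
proof -
  have "Suc k * (2*k choose Suc k) = k * (2*k choose k)"
  proof (cases k)
    case (Suc m)
    then show ?thesis using Suc_times_binomial_add[of k m] by (simp add: mult_2)
  qed simp
  then have "2*k choose k = Suc k * ((2*k choose k) - (2*k choose Suc k))"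
    by (simp add: diff_mult_distrib2)
  then have "2*k choose k = Suc k * catalan k"
    unfolding catalan_def by (metis Suc_eq_plus1 nonzero_mult_div_cancel_left nat.distinct(1))
  then have "of_nat (catalan k) * of_nat (Suc k) = (of_nat (2*k choose k) :: 'a)"
    by (simp only: mult.commute of_nat_mult)
  then show ?thesis by (simp add: field_simps del: of_nat_Suc)
qed

text \<open>\<open>narayana m k\<close> is the Narayana number \<open>N(m, k+1)\<close> in the usual indexing.\<close>
definition narayana :: "nat \<Rightarrow> nat \<Rightarrow> 'a::field_char_0" where
  "narayana m k = of_nat (m choose k) * of_nat (m choose Suc k) / of_nat m"

lemma narayana_eq_0: "m \<le> k \<Longrightarrow> narayana m k = 0"
  by (simp add: narayana_def)

lemma narayana_Suc:
  "narayana (Suc n) k = of_nat (n choose k) * of_nat (Suc n choose k) / of_nat (Suc k)"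
proof -
  have "of_nat (Suc k) * of_nat (Suc n choose Suc k) = (of_nat (Suc n) * of_nat (n choose k) :: 'a)"
    by (metis Suc_times_binomial of_nat_mult)
  then show ?thesis
    unfolding narayana_def by (simp add: field_simps del: of_nat_Suc binomial_Suc_Suc)
qed

lemma Suc_times_binomial_catalan_binomial:
  assumes "j \<le> k" "k \<le> n"
  shows "(of_nat (Suc k) :: 'a::field_char_0) * of_nat (n choose (2*j)) * of_nat (catalan j)
           * of_nat ((n - 2*j) choose (k - j))
       = of_nat (n choose k) * of_nat (Suc k choose Suc j) * of_nat ((n - k) choose j)"
proof (cases "j \<le> n - k")
  case True
  then obtain p q where k: "k = j + p" and n: "n = j + p + j + q"
    using assms by (metis add.assoc le_Suc_ex le_add_diff_inverse)
  have diffs: "n - 2*j = p + q" "n - k = j + q" "k - j = p"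
    using k n by simp_all
  have "(of_nat (n choose (2*j)) :: 'a) = fact n / (fact (2*j) * fact (p + q))"
       "(of_nat (2*j choose j) :: 'a) = fact (2*j) / (fact j * fact j)"
       "(of_nat ((p + q) choose p) :: 'a) = fact (p + q) / (fact p * fact q)"
       "(of_nat (n choose k) :: 'a) = fact n / (fact (j + p) * fact (j + q))"
       "(of_nat (Suc k choose Suc j) :: 'a) = fact (Suc (j + p)) / (fact (Suc j) * fact p)"
       "(of_nat ((j + q) choose j) :: 'a) = fact (j + q) / (fact j * fact q)"
    using binomial_fact[of "2*j" n] binomial_fact[of j "2*j"] binomial_fact[of p "p + q"]
      binomial_fact[of k n] binomial_fact[of "Suc j" "Suc k"] binomial_fact[of j "j + q"]
    by (simp_all add: k n del: binomial_Suc_Suc)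
  note facts = this
  show ?thesis
    unfolding of_nat_catalan diffs facts
    using k by (simp add: divide_simps del: of_nat_add)
next
  case False
  then have "(n - k) choose j = 0" and "n choose (2*j) = 0 \<or> (n - 2*j) choose (k - j) = 0"
    using assms by auto
  then show ?thesis
    by (elim disjE) (simp_all del: binomial_Suc_Suc binomial_eq_0_iff)
qed

lemma sum_binomial_catalan_binomial_eq_narayana:
  assumes "k \<le> n"
  shows "(\<Sum>j\<le>k. of_nat (n choose (2*j)) * of_nat (catalan j) * of_nat ((n - 2*j) choose (k - j)))
       = (narayana (Suc n) k :: 'a::field_char_0)"
proof -
  have sym: "Suc k choose Suc j = Suc k choose (k - j)" if "j \<le> k" for j
    using binomial_symmetric[of "Suc j" "Suc k"] that by simp
  have "of_nat (Suc k) * (\<Sum>j\<le>k. of_nat (n choose (2*j)) * of_nat (catalan j)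
          * of_nat ((n - 2*j) choose (k - j)))
      = (\<Sum>j\<le>k. of_nat (n choose k) * of_nat (Suc k choose Suc j) * of_nat ((n - k) choose j) :: 'a)"
    unfolding sum_distrib_left using Suc_times_binomial_catalan_binomial assms
    by (intro sum.cong) (auto simp: mult.assoc)
  also have "\<dots> = of_nat (n choose k) * of_nat (\<Sum>j\<le>k. ((n - k) choose j) * (Suc k choose (k - j)))"
    unfolding of_nat_sum sum_distrib_left
    by (intro sum.cong refl) (simp add: sym mult_ac del: binomial_Suc_Suc)
  also have "\<dots> = of_nat (n choose k) * of_nat (Suc n choose k)"
    using vandermonde[of "n - k" "Suc k" k] assms by simp
  finally show ?thesis
    unfolding narayana_Suc by (simp add: field_simps del: of_nat_Suc)
qed

lemma binomial_times_binomial_Suc_eq_catalan: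
  assumes "j \<le> Suc n"
  shows "(of_nat (Suc n choose j) :: 'a::field_char_0) * of_nat ((Suc n + j) choose Suc j)
       = of_nat (Suc n) * of_nat (catalan j) * of_nat ((Suc n + j) choose (2*j))"
proof -
  obtain q where "Suc n = j + q" using assms le_Suc_ex by blast
  then have d: "Suc n - j = q" "Suc n + j - Suc j = n" "Suc n + j - 2*j = q"
    by simp_all
  have "(of_nat (Suc n choose j) :: 'a) = fact (Suc n) / (fact j * fact q)"
    using binomial_fact[OF assms] unfolding d .
  moreover have "(of_nat ((Suc n + j) choose Suc j) :: 'a) = fact (Suc n + j) / (fact (Suc j) * fact n)"
    using binomial_fact[of "Suc j" "Suc n + j"] unfolding d by simp
  moreover have "(of_nat (2*j choose j) :: 'a) = fact (2*j) / (fact j * fact j)"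
    using binomial_fact[of j "2*j"] by simp
  moreover have "(of_nat ((Suc n + j) choose (2*j)) :: 'a) = fact (Suc n + j) / (fact (2*j) * fact q)"
    using binomial_fact[of "2*j" "Suc n + j"] assms unfolding d by simp
  ultimately have facts: "(of_nat (Suc n choose j) :: 'a) = fact (Suc n) / (fact j * fact q)"
    "(of_nat ((Suc n + j) choose Suc j) :: 'a) = fact (Suc n + j) / (fact (Suc j) * fact n)"
    "(of_nat (2*j choose j) :: 'a) = fact (2*j) / (fact j * fact j)"
    "(of_nat ((Suc n + j) choose (2*j)) :: 'a) = fact (Suc n + j) / (fact (2*j) * fact q)"
    by blast+
  show ?thesis
    unfolding of_nat_catalan facts
    by (simp add: divide_simps del: of_nat_add of_nat_Suc fact_Suc add_Suc)
       (simp add: algebra_simps)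
qed

lemma sum_narayana_binomial_eq_catalan_binomial:
  assumes "j \<le> Suc n"
  shows "(\<Sum>k\<le>j. narayana (Suc n) k * of_nat ((Suc n - k) choose (j - k)))
       = (of_nat (catalan j) * of_nat ((Suc n + j) choose (2*j)) :: 'a::field_char_0)"
proof -
  have summand: "narayana (Suc n) k * of_nat ((Suc n - k) choose (j - k))
      = (of_nat (Suc n choose j) / of_nat (Suc n) * of_nat ((j choose (j - k)) * (Suc n choose Suc k)) :: 'a)"
    if "k \<le> j" for k
  proof -
    have "(Suc n choose j) * (j choose k) = (Suc n choose k) * ((Suc n - k) choose (j - k))"
      using choose_mult[of k j "Suc n"] that assms by simp
    then have "(of_nat (Suc n choose j) :: 'a) * of_nat (j choose (j - k))
        = of_nat (Suc n choose k) * of_nat ((Suc n - k) choose (j - k))"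
      using binomial_symmetric[OF that] by (metis of_nat_mult)
    then show ?thesis
      unfolding narayana_def of_nat_mult by (simp add: field_simps del: of_nat_Suc binomial_Suc_Suc)
  qed
  have vandermonde_shifted: "(\<Sum>k\<le>j. (j choose (j - k)) * (Suc n choose Suc k)) = (Suc n + j) choose Suc j"
  proof -
    have "(\<Sum>i\<le>Suc j. (Suc n choose i) * (j choose (Suc j - i))) = (Suc n + j) choose Suc j"
      by (rule vandermonde)
    then show ?thesis
      unfolding sum.atMost_Suc_shift by (simp add: mult.commute binomial_eq_0 del: binomial_Suc_Suc)
  qed
  have "(\<Sum>k\<le>j. narayana (Suc n) k * of_nat ((Suc n - k) choose (j - k)))
      = (\<Sum>k\<le>j. of_nat (Suc n choose j) / of_nat (Suc n)
           * of_nat ((j choose (j - k)) * (Suc n choose Suc k)) :: 'a)"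
    by (rule sum.cong) (simp_all add: summand)
  also have "\<dots> = of_nat (Suc n choose j) / of_nat (Suc n) * of_nat ((Suc n + j) choose Suc j)"
    by (simp only: vandermonde_shifted flip: sum_distrib_left of_nat_sum)
  finally have "(\<Sum>k\<le>j. narayana (Suc n) k * of_nat ((Suc n - k) choose (j - k)))
      = of_nat (Suc n choose j) / of_nat (Suc n) * (of_nat ((Suc n + j) choose Suc j) :: 'a)" .
  then show ?thesis
    using binomial_times_binomial_Suc_eq_catalan[OF assms, where 'a='a]
    by (simp add: field_simps del: of_nat_Suc)
qed

lemma motzkin_eq_sum_narayana:
  fixes x y :: complex
  shows "motzkin n (x + y) (x * y) = (\<Sum>k\<le>n. narayana (Suc n) k * y^k * x^(n - k))"
proof -
  define a where "a j = of_nat (n choose (2*j)) * (of_nat (catalan j) :: complex)" for j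
  have "motzkin n (x + y) (x * y) = (\<Sum>j\<le>n. a j * y^j * (x + y)^(n - 2*j) * x^(n - j - (n - 2*j)))"
    unfolding motzkin_def
  proof (rule sum.mono_neutral_cong_left)
    show "\<forall>j\<in>{..n} - {0..n div 2}. a j * y^j * (x + y)^(n - 2*j) * x^(n - j - (n - 2*j)) = 0"
      by (auto simp: a_def)
    show "of_nat (n choose (2*j)) * of_nat (catalan j) * (x + y)^(n - 2*j) * (x * y)^j
        = a j * y^j * (x + y)^(n - 2*j) * x^(n - j - (n - 2*j))" if "j \<in> {0..n div 2}" for j
    proof -
      have "n - j - (n - 2*j) = j" using that by auto
      then show ?thesis by (simp add: a_def power_mult_distrib mult_ac)
    qed
  qed auto
  also have "\<dots> = (\<Sum>k\<le>n. (\<Sum>j\<le>k. a j * of_nat ((n - 2*j) choose (k - j))) * y^k * x^(n - k))"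
    by (rule sum_binomial_expand_homogeneous) simp
  also have "\<dots> = (\<Sum>k\<le>n. narayana (Suc n) k * y^k * x^(n - k))"
    by (intro sum.cong refl)
       (simp add: a_def sum_binomial_catalan_binomial_eq_narayana[symmetric] mult.assoc)
  finally show ?thesis .
qed

lemma sum_narayana_shift_eq_catalan:
  fixes x y :: "'a::field_char_0"
  shows "(\<Sum>k\<le>Suc n. narayana (Suc n) k * y^k * (x + y)^(Suc n - k))
       = (\<Sum>k\<le>Suc n. of_nat (catalan k) * of_nat ((Suc n + k) choose (2*k)) * y^k * x^(Suc n - k))"
proof -
  have "(\<Sum>k\<le>Suc n. narayana (Suc n) k * y^k * (x + y)^(Suc n - k))
      = (\<Sum>k\<le>Suc n. narayana (Suc n) k * y^k * (x + y)^(Suc n - k) * x^(Suc n - k - (Suc n - k)))"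
    by simp
  also have "\<dots> = (\<Sum>k\<le>Suc n. (\<Sum>j\<le>k. narayana (Suc n) j * of_nat ((Suc n - j) choose (k - j)))
                      * y^k * x^(Suc n - k))"
    by (rule sum_binomial_expand_homogeneous) simp
  also have "\<dots> = (\<Sum>k\<le>Suc n. of_nat (catalan k) * of_nat ((Suc n + k) choose (2*k)) * y^k * x^(Suc n - k))"
    by (intro sum.cong refl) (simp add: sum_narayana_binomial_eq_catalan_binomial)
  finally show ?thesis .
qed

lemma sum_powi_binomial_eq_sum_narayana:
  fixes x y :: complex
  assumes "x \<noteq> 0"
  shows "(\<Sum>k=0..n+1. x powi (int n - 2 * int k) * (x * y)^k / of_nat (n+1)
            * of_nat ((n+1) choose k) * of_nat ((n+1) choose (k+1)))
       = (\<Sum>k\<le>n. narayana (Suc n) k * y^k * x^(n - k))"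
proof -
  have summand: "x powi (int n - 2 * int k) * (x * y)^k / of_nat (n+1)
      * of_nat ((n+1) choose k) * of_nat ((n+1) choose (k+1))
      = narayana (Suc n) k * y^k * x^(n - k)" if "k \<le> n" for k
  proof -
    have "x powi (int n - 2 * int k) * x^k = x powi (int n - 2 * int k + int k)"
      using assms by (simp only: power_int_add power_int_of_nat simp_thms)
    also have "int n - 2 * int k + int k = int (n - k)"
      using that by simp
    finally have "x powi (int n - 2 * int k) * x^k = x^(n - k)"
      by (simp add: power_int_of_nat)
    then show ?thesis
      unfolding narayana_def by (simp add: power_mult_distrib field_simps del: binomial_Suc_Suc)
  qed
  have "(\<Sum>k=0..n+1. x powi (int n - 2 * int k) * (x * y)^k / of_nat (n+1)
            * of_nat ((n+1) choose k) * of_nat ((n+1) choose (k+1)))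
      = (\<Sum>k\<le>n. x powi (int n - 2 * int k) * (x * y)^k / of_nat (n+1)
            * of_nat ((n+1) choose k) * of_nat ((n+1) choose (k+1)))"
    by (simp add: atLeast0AtMost binomial_eq_0 del: binomial_Suc_Suc)
  also have "\<dots> = (\<Sum>k\<le>n. narayana (Suc n) k * y^k * x^(n - k))"
    by (intro sum.cong refl summand) simp
  finally show ?thesis .
qed

lemma scaled_sum_catalan_eq_sum_narayana:
  fixes x y :: complex
  assumes "x \<noteq> 0" "y \<noteq> 0" "x \<noteq> y"
  shows "(x - y)^(n+2) / (x * y) * (\<Sum>k=0..n+1. ((x + y) / (x - y) - 1)^(k+1) * of_nat (catalan k) / 2^(k+1)
            * of_nat ((n+1+k) choose (2*k)))
       = (\<Sum>k\<le>n. narayana (Suc n) k * y^k * x^(n - k))"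
proof -
  define d where "d = x - y"
  have d: "d \<noteq> 0" "d + y = x" using assms by (simp_all add: d_def)
  have "(x + y) / d - 1 = 2 * y / d"
    using d by (simp add: field_simps d_def)
  moreover have summand: "d^(n+2) / (x * y) * ((2 * y / d)^(k+1) * of_nat (catalan k) / 2^(k+1)
        * of_nat ((n+1+k) choose (2*k)))
      = of_nat (catalan k) * of_nat ((Suc n + k) choose (2*k)) * y^k * d^(Suc n - k) / x"
    if "k \<le> Suc n" for k
  proof -
    have "d^(n+2) = d^(k+1) * d^(Suc n - k)"
      using that by (simp flip: power_add)
    then show ?thesis
      using assms d by (simp add: power_mult_distrib power_divide field_simps)
  qed
  ultimately have "(x - y)^(n+2) / (x * y) * (\<Sum>k=0..n+1. ((x + y) / (x - y) - 1)^(k+1)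
            * of_nat (catalan k) / 2^(k+1) * of_nat ((n+1+k) choose (2*k)))
      = (\<Sum>k\<le>Suc n. of_nat (catalan k) * of_nat ((Suc n + k) choose (2*k)) * y^k * d^(Suc n - k)) / x"
    unfolding d_def[symmetric] sum_distrib_left sum_divide_distrib
    by (simp add: atLeast0AtMost summand del: power_Suc)
  also have "\<dots> = (\<Sum>k\<le>Suc n. narayana (Suc n) k * y^k * x^(Suc n - k)) / x"
    by (simp only: sum_narayana_shift_eq_catalan[of n y d, unfolded d(2)])
  also have "\<dots> = (\<Sum>k\<le>n. narayana (Suc n) k * y^k * x^(n - k))"
    using assms by (simp add: narayana_eq_0 sum_divide_distrib Suc_diff_le mult.assoc)
  finally show ?thesis .
qed

theorem proposition3p2:
  fixes n :: nat and \<alpha> \<beta> s :: complex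
  assumes "\<beta> \<noteq> 0" and "\<alpha>^2 \<noteq> 4*\<beta>" and "s^2 = \<alpha>^2 - 4*\<beta>"
  shows "(motzkin n \<alpha> \<beta> =
           (\<Sum>k=0..n+1. ((\<alpha> + s)/2) powi (int n - 2 * int k) * \<beta>^k / of_nat (n+1)
              * of_nat ((n+1) choose k) * of_nat ((n+1) choose (k+1)))) \<and>
         (motzkin n \<alpha> \<beta> =
           s^(n+2) / \<beta> * (\<Sum>k=0..n+1. (\<alpha>/s - 1)^(k+1) * of_nat (catalan k) / 2^(k+1)
              * of_nat ((n+1+k) choose (2*k))))"
proof -
  define x y where "x = (\<alpha> + s) / 2" and "y = (\<alpha> - s) / 2"
  have \<alpha>: "\<alpha> = x + y" and s: "s = x - y"
    by (simp_all add: x_def y_def field_simps)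
  have \<beta>: "\<beta> = x * y"
    using assms(3) by (simp add: x_def y_def field_simps power2_eq_square)
  have "x \<noteq> 0" "y \<noteq> 0" using \<beta> assms(1) by auto
  moreover have "x \<noteq> y" using assms(2,3) s by auto
  ultimately show ?thesis
    using motzkin_eq_sum_narayana[of n x y] sum_powi_binomial_eq_sum_narayana[of x n y]
      scaled_sum_catalan_eq_sum_narayana[of x y n]
    unfolding \<alpha> \<beta> s by (simp add: x_def y_def)
qed

end
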